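(* Consider the discounted Markov decision process and its optimal policy $\pi^*$ described in the context. For every traffic type $s\in\mathcal{S}$ there exists an integer $K_{th}(s)$ such that for all $k\in\{0,1,\dots,K\}$, $$\pi^*(s,k)=\begin{cases}0,& k<K_{th}(s),\\ 1,& k\ge K_{th}(s).\end{cases}$$
   Context: Let $\mathcal{S}=\{s_0,s_1,\dots,s_N\}$ be a finite set of traffic types, $s_0$ denoting the idle state, with probabilities $p(s)\in(0,1)$, $\sum_{s}p(s)=1$ (types in successive slots i.i.d.). Non-idle types have benefits $0<b_{s_1}<\dots<b_{s_N}$. Fix an integer $K\ge1$, a cost $c>0$, $p,q\in(0,1)$ and $\beta\in(0,1)$. States are $(s,k)$, $s\in\mathcal{S}$, $k\in\{0,\dots,K\}$; actions $a\in\{0,1\}$ (for $s\ne s_0$: $0$ = cellular mode, $1$ = D2D mode; for $s=s_0$: $0$ = accept D2D requests, $1$ = refuse). Transition probabilities $P\{(s',k')\mid(s,k),a\}$: for $s\ne s_0,k>0$: $p(s')\{(1-a)+a(1-q)\}$ if $k'=k$, $p(s')qa$ if $k'=k-1$; for $s\ne s_0,k=0$: $p(s')$ if $k'=0$; for $s=s_0,k<K$: $p(s')\{a+(1-a)(1-p)\}$ if $k'=k$, $p(s')p(1-a)$ if $k'=k+1$; for $s=s_0,k=K$: $p(s')$ if $k'=K$; otherwise $0$. Expected rewards: $\mu(s_0,k,a)=-cp(1-a)$; for $s\ne s_0$, $\mu(s,k,a)=q\,a\,b_s\,I(k>0)$. $V^*$ is the optimal discounted value function, the unique solution of $V^*(s,k)=\max_{a\in\{0,1\}}\{\mu(s,k,a)+\beta\sum_{(s',k')}P\{(s',k')\mid(s,k),a\}V^*(s',k')\}$.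 The optimal policy $\pi^*$: $\pi^*(s,0)=0$ for $s\ne s_0$, $\pi^*(s_0,K)=1$, and in every other state $\pi^*(s,k)=0$ if action $0$ attains the maximum in this Bellman equation and $\pi^*(s,k)=1$ otherwise. *)

theory Defs
  imports Complex_Main
begin

(* Traffic types are 0..N, type 0 is the idle state s_0.
   ps s = probability of type s; b s = benefit of non-idle type s.
   Queue/level k ranges over 0..K.  Actions a are naturals in {0,1}. *)

definition trans_prob ::
  "nat \<Rightarrow> (nat \<Rightarrow> real) \<Rightarrow> real \<Rightarrow> real \<Rightarrow>
   nat \<Rightarrow> nat \<Rightarrow> nat \<Rightarrow> nat \<Rightarrow> nat \<Rightarrow> real" where
  "trans_prob K ps p q s k a s' k' =
     (let a' = real a in
      if s \<noteq> 0 \<and> k > 0 then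
        (if k' = k then ps s' * ((1 - a') + a' * (1 - q))
         else if k' = k - 1 then ps s' * q * a' else 0)
      else if s \<noteq> 0 \<and> k = 0 then
        (if k' = 0 then ps s' else 0)
      else if s = 0 \<and> k < K then
        (if k' = k then ps s' * (a' + (1 - a') * (1 - p))
         else if k' = k + 1 then ps s' * p * (1 - a') else 0)
      else if s = 0 \<and> k = K then
        (if k' = K then ps s' else 0)
      else 0)"

definition reward ::
  "(nat \<Rightarrow> real) \<Rightarrow> real \<Rightarrow> real \<Rightarrow> real \<Rightarrow> nat \<Rightarrow> nat \<Rightarrow> nat \<Rightarrow> real" where
  "reward b c p q s k a =
     (if s = 0 then - c * p * (1 - real a)
      else q * real a * b s * (if k > 0 then 1 else 0))"

definition Qval ::
  "nat \<Rightarrow> nat \<Rightarrow> (nat \<Rightarrow> real) \<Rightarrow> (nat \<Rightarrow> real) \<Rightarrow> real \<Rightarrow> real \<Rightarrow> real \<Rightarrow> real \<Rightarrow>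
   (nat \<Rightarrow> nat \<Rightarrow> real) \<Rightarrow> nat \<Rightarrow> nat \<Rightarrow> nat \<Rightarrow> real" where
  "Qval N K ps b c p q \<beta> V s k a =
     reward b c p q s k a +
     \<beta> * (\<Sum>s'\<in>{0..N}. \<Sum>k'\<in>{0..K}. trans_prob K ps p q s k a s' k' * V s' k')"

definition is_bellman_solution ::
  "nat \<Rightarrow> nat \<Rightarrow> (nat \<Rightarrow> real) \<Rightarrow> (nat \<Rightarrow> real) \<Rightarrow> real \<Rightarrow> real \<Rightarrow> real \<Rightarrow> real \<Rightarrow>
   (nat \<Rightarrow> nat \<Rightarrow> real) \<Rightarrow> bool" where
  "is_bellman_solution N K ps b c p q \<beta> V \<longleftrightarrow>
     (\<forall>s\<le>N. \<forall>k\<le>K. V s k = max (Qval N K ps b c p q \<beta> V s k 0) (Qval N K ps b c p q \<beta> V s k 1))"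

definition opt_policy ::
  "nat \<Rightarrow> nat \<Rightarrow> (nat \<Rightarrow> real) \<Rightarrow> (nat \<Rightarrow> real) \<Rightarrow> real \<Rightarrow> real \<Rightarrow> real \<Rightarrow> real \<Rightarrow>
   (nat \<Rightarrow> nat \<Rightarrow> real) \<Rightarrow> nat \<Rightarrow> nat \<Rightarrow> nat" where
  "opt_policy N K ps b c p q \<beta> V s k =
     (if s \<noteq> 0 \<and> k = 0 then 0
      else if s = 0 \<and> k = K then 1
      else if Qval N K ps b c p q \<beta> V s k 0 \<ge> Qval N K ps b c p q \<beta> V s k 1 then 0
      else 1)"

end

theory Submission
  imports Defs
begin

text \<open>Let \<open>w(k) = \<Sum>\<^sub>s p(s) V(s,k)\<close> be the value expected at level \<open>k\<close> before the next traffic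
type is drawn. In a busy state \<open>(s \<noteq> s\<^sub>0, k > 0)\<close> D2D mode beats cellular mode by
\<open>q (b\<^sub>s - \<beta> (w(k) - w(k-1)))\<close>, and in the idle state refusing beats accepting by
\<open>p (c - \<beta> (w(k+1) - w(k)))\<close>. Both advantages are nondecreasing in \<open>k\<close> once \<open>w\<close> is concave,
which gives the thresholds. Concavity of \<open>w\<close> holds along value iteration started at \<open>0\<close>: a
Bellman step adds to \<open>\<beta> w\<close> the positive part of one of these advantages, whose second
differences are at most \<open>-p\<close> resp. \<open>-q\<close> times those of \<open>\<beta> w\<close>. On the level of \<open>w\<close> a Bellman step
is a \<open>\<beta>\<close>-contraction, so the iterates converge to the \<open>w\<close> of the solution \<open>V\<close>, which inherits
concavity.\<close>

lemma sum_one_point: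
  fixes f :: "'a \<Rightarrow> 'b::semiring_0"
  assumes "finite A" "i \<in> A"
  shows "(\<Sum>x\<in>A. (if x = i then X else 0) * f x) = X * f i"
proof -
  have "(\<Sum>x\<in>A. (if x = i then X else 0) * f x) = (\<Sum>x\<in>A. if x = i then X * f i else 0)"
    by (rule sum.cong) auto
  then show ?thesis using assms by simp
qed

lemma sum_two_points:
  fixes f :: "'a \<Rightarrow> 'b::semiring_0"
  assumes "finite A" "i \<in> A" "j \<in> A" "i \<noteq> j"
  shows "(\<Sum>x\<in>A. (if x = i then X else if x = j then Y else 0) * f x) = X * f i + Y * f j"
proof -
  have "(\<Sum>x\<in>A. (if x = i then X else if x = j then Y else 0) * f x)
      = (\<Sum>x\<in>A. (if x = i then X * f i else 0) + (if x = j then Y * f j else 0))"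
    by (rule sum.cong) (use assms in auto)
  also have "\<dots> = X * f i + Y * f j"
    using assms by (simp add: sum.distrib)
  finally show ?thesis .
qed

lemma abs_convex_comb_le:
  fixes \<alpha> \<gamma> x y M :: real
  assumes "0 \<le> \<alpha>" "0 \<le> \<gamma>" "\<alpha> + \<gamma> = 1" "\<bar>x\<bar> \<le> M" "\<bar>y\<bar> \<le> M"
  shows "\<bar>\<alpha> * x + \<gamma> * y\<bar> \<le> M"
proof -
  have "\<bar>\<alpha> * x + \<gamma> * y\<bar> \<le> \<alpha> * \<bar>x\<bar> + \<gamma> * \<bar>y\<bar>"
    using assms by (metis abs_mult abs_of_nonneg abs_triangle_ineq)
  also have "\<dots> \<le> \<alpha> * M + \<gamma> * M"
    using assms by (intro add_mono mult_left_mono) auto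
  finally show ?thesis
    using assms by (simp add: distrib_right[symmetric])
qed

lemma abs_weighted_sum_le:
  fixes u :: "'a \<Rightarrow> real"
  assumes "\<forall>x\<in>A. 0 \<le> u x" "(\<Sum>x\<in>A. u x) = 1" "\<forall>x\<in>A. \<bar>f x\<bar> \<le> M"
  shows "\<bar>\<Sum>x\<in>A. u x * f x\<bar> \<le> M"
proof -
  have "\<bar>\<Sum>x\<in>A. u x * f x\<bar> \<le> (\<Sum>x\<in>A. u x * \<bar>f x\<bar>)"
    using sum_abs[of "\<lambda>x. u x * f x" A] assms(1) by (simp add: abs_mult)
  also have "\<dots> \<le> (\<Sum>x\<in>A. u x * M)"
    using assms(1,3) by (intro sum_mono mult_left_mono) auto
  also have "\<dots> = M"
    using assms(2) by (simp add: sum_distrib_right[symmetric])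
  finally show ?thesis .
qed

lemma max_zero_shift_le:
  fixes A d :: real
  assumes "0 \<le> d"
  shows "max 0 (A + d) - max 0 A \<le> d"
  using assms by (simp add: max_def)

lemma max_self_add_scaled:
  fixes x y q :: real
  assumes "0 \<le> q"
  shows "max x (x + q * y) = x + q * max 0 y"
  using assms by (cases "y \<le> 0") (auto simp: max_def zero_le_mult_iff mult_le_0_iff)

lemma abs_max_diff_le:
  fixes a b c d e :: real
  assumes "\<bar>a - c\<bar> \<le> e" "\<bar>b - d\<bar> \<le> e"
  shows "\<bar>max a b - max c d\<bar> \<le> e"
  using assms by (simp add: max_def abs_le_iff)

lemma mono_binary_threshold:
  fixes f :: "nat \<Rightarrow> nat"
  assumes binary: "\<forall>k\<le>K. f k = 0 \<or> f k = 1"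
    and mono: "\<forall>i j. i \<le> j \<longrightarrow> j \<le> K \<longrightarrow> f i = 1 \<longrightarrow> f j = 1"
  shows "\<exists>Kth::int. \<forall>k\<le>K. f k = (if int k < Kth then 0 else 1)"
proof (cases "\<exists>k\<le>K. f k = 1")
  case True
  define m where "m = (LEAST k. k \<le> K \<and> f k = 1)"
  have m: "m \<le> K" "f m = 1"
    using LeastI_ex[OF True] unfolding m_def by auto
  have "f k = (if int k < int m then 0 else 1)" if "k \<le> K" for k
  proof (cases "f k = 1")
    case True
    then have "m \<le> k" unfolding m_def using \<open>k \<le> K\<close> by (simp add: Least_le)
    then show ?thesis using True by simp
  next
    case False
    then have "k < m" using mono m \<open>k \<le> K\<close> by (meson not_le less_imp_le)
    then show ?thesis using False binary \<open>k \<le> K\<close> by auto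
  qed
  then show ?thesis by blast
next
  case False
  then have "\<forall>k\<le>K. f k = (if int k < int K + 1 then 0 else 1)"
    using binary by auto
  then show ?thesis by blast
qed

definition concave_levels :: "nat \<Rightarrow> (nat \<Rightarrow> real) \<Rightarrow> bool" where
  "concave_levels K w \<longleftrightarrow> (\<forall>j. 1 \<le> j \<longrightarrow> Suc j \<le> K \<longrightarrow> w (Suc j) - w j \<le> w j - w (j - 1))"

lemma concave_levelsD:
  assumes "concave_levels K w" "1 \<le> j" "Suc j \<le> K"
  shows "w (Suc j) - w j \<le> w j - w (j - 1)"
  using assms unfolding concave_levels_def by blast

lemma concave_levels_increment_antimono:
  assumes "concave_levels K w" "1 \<le> i" "i \<le> j" "j \<le> K"
  shows "w j - w (j - 1) \<le> w i - w (i - 1)"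
  using assms(3,4)
proof (induction j rule: dec_induct)
  case base
  then show ?case by simp
next
  case (step n)
  have "w (Suc n) - w n \<le> w n - w (n - 1)"
    using concave_levelsD[OF assms(1)] assms(2) step by simp
  then show ?case using step by simp
qed

lemma concave_levels_limit:
  assumes "\<And>n. concave_levels K (w n)" "\<And>k. k \<le> K \<Longrightarrow> (\<lambda>n. w n k) \<longlonglongrightarrow> v k"
  shows "concave_levels K v"
  unfolding concave_levels_def
proof (intro allI impI)
  fix j
  assume j: "1 \<le> j" "Suc j \<le> K"
  have "(\<lambda>n. (w n j - w n (j - 1)) - (w n (Suc j) - w n j))
        \<longlonglongrightarrow> (v j - v (j - 1)) - (v (Suc j) - v j)"
    using j by (intro tendsto_diff assms(2)) auto
  moreover have "0 \<le> (w n j - w n (j - 1)) - (w n (Suc j) - w n j)" for n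
    using concave_levelsD[OF assms(1)[of n] j] by linarith
  ultimately have "0 \<le> (v j - v (j - 1)) - (v (Suc j) - v j)"
    by (intro LIMSEQ_le_const) auto
  then show "v (Suc j) - v j \<le> v j - v (j - 1)" by simp
qed

lemma LIMSEQ_geometric_bound:
  fixes x :: "nat \<Rightarrow> real"
  assumes "\<And>n. \<bar>x n - l\<bar> \<le> \<beta> ^ n * C" "\<bar>\<beta>\<bar> < 1"
  shows "x \<longlonglongrightarrow> l"
proof (rule real_tendsto_sandwich)
  show "(\<lambda>n. l - \<beta> ^ n * C) \<longlonglongrightarrow> l" "(\<lambda>n. l + \<beta> ^ n * C) \<longlonglongrightarrow> l"
    using LIMSEQ_power_zero[of \<beta>] assms(2) by (auto intro!: tendsto_eq_intros)
  show "\<forall>\<^sub>F n in sequentially. l - \<beta> ^ n * C \<le> x n" "\<forall>\<^sub>F n in sequentially. x n \<le> l + \<beta> ^ n * C"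
    using assms(1) by (auto simp: abs_le_iff algebra_simps)
qed

definition mean_value :: "nat \<Rightarrow> (nat \<Rightarrow> real) \<Rightarrow> (nat \<Rightarrow> nat \<Rightarrow> real) \<Rightarrow> nat \<Rightarrow> real" where
  "mean_value N ps U k = (\<Sum>s\<in>{0..N}. ps s * U s k)"

lemma Qval_busy:
  assumes "s \<noteq> 0" "0 < k" "k \<le> K"
  shows "Qval N K ps b c p q \<beta> U s k a = q * real a * b s +
     \<beta> * ((1 - real a + real a * (1 - q)) * mean_value N ps U k + q * real a * mean_value N ps U (k - 1))"
proof -
  have "trans_prob K ps p q s k a s' k' = (if k' = k then ps s' * (1 - real a + real a * (1 - q))
      else if k' = k - 1 then ps s' * q * real a else 0)" for s' k'
    using assms by (simp add: trans_prob_def Let_def)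
  then have inner: "(\<Sum>k'\<in>{0..K}. trans_prob K ps p q s k a s' k' * U s' k') =
     ps s' * (1 - real a + real a * (1 - q)) * U s' k + ps s' * q * real a * U s' (k - 1)" for s'
    using assms by (simp only:) (intro sum_two_points, auto)
  then show ?thesis
    unfolding Qval_def inner mean_value_def using assms
    by (simp add: reward_def sum.distrib sum_subtractf sum_distrib_left algebra_simps)
qed

lemma Qval_busy_empty:
  assumes "s \<noteq> 0"
  shows "Qval N K ps b c p q \<beta> U s 0 a = \<beta> * mean_value N ps U 0"
proof -
  have "trans_prob K ps p q s 0 a s' k' = (if k' = 0 then ps s' else 0)" for s' k'
    using assms by (simp add: trans_prob_def Let_def)
  then have inner: "(\<Sum>k'\<in>{0..K}. trans_prob K ps p q s 0 a s' k' * U s' k') = ps s' * U s' 0" for s'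
    by (simp only:) (intro sum_one_point, auto)
  then show ?thesis
    unfolding Qval_def inner mean_value_def using assms
    by (simp add: reward_def sum.distrib sum_subtractf sum_distrib_left algebra_simps)
qed

lemma Qval_idle:
  assumes "k < K"
  shows "Qval N K ps b c p q \<beta> U 0 k a = - c * p * (1 - real a) +
     \<beta> * ((real a + (1 - real a) * (1 - p)) * mean_value N ps U k
          + p * (1 - real a) * mean_value N ps U (Suc k))"
proof -
  have "trans_prob K ps p q 0 k a s' k' = (if k' = k then ps s' * (real a + (1 - real a) * (1 - p))
      else if k' = Suc k then ps s' * p * (1 - real a) else 0)" for s' k'
    using assms by (simp add: trans_prob_def Let_def)
  then have inner: "(\<Sum>k'\<in>{0..K}. trans_prob K ps p q 0 k a s' k' * U s' k') =
     ps s' * (real a + (1 - real a) * (1 - p)) * U s' k + ps s' * p * (1 - real a) * U s' (Suc k)" for s'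
    using assms by (simp only:) (intro sum_two_points, auto)
  then show ?thesis
    unfolding Qval_def inner mean_value_def
    by (simp add: reward_def sum.distrib sum_subtractf sum_distrib_left algebra_simps)
qed

lemma Qval_idle_full:
  "Qval N K ps b c p q \<beta> U 0 K a = - c * p * (1 - real a) + \<beta> * mean_value N ps U K"
proof -
  have "trans_prob K ps p q 0 K a s' k' = (if k' = K then ps s' else 0)" for s' k'
    by (simp add: trans_prob_def Let_def)
  then have inner: "(\<Sum>k'\<in>{0..K}. trans_prob K ps p q 0 K a s' k' * U s' k') = ps s' * U s' K" for s'
    by (simp only:) (intro sum_one_point, auto)
  then show ?thesis
    unfolding Qval_def inner mean_value_def
    by (simp add: reward_def sum.distrib sum_subtractf sum_distrib_left algebra_simps)
qed

context
  fixes N K :: nat and ps b :: "nat \<Rightarrow> real" and c p q \<beta> :: real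
  assumes ps_nonneg: "\<forall>s\<le>N. 0 \<le> ps s"
    and ps_sum: "(\<Sum>s\<in>{0..N}. ps s) = 1"
    and c_pos: "c > 0"
    and p_range: "0 < p" "p < 1"
    and q_range: "0 < q" "q < 1"
    and beta_range: "0 < \<beta>" "\<beta> < 1"
begin

text \<open>The excess of the Bellman maximum over \<open>\<beta> w(k)\<close>: the positive part of the advantage of
D2D mode in a busy state, resp. of accepting requests in the idle state.\<close>

definition switch_gain :: "(nat \<Rightarrow> real) \<Rightarrow> nat \<Rightarrow> nat \<Rightarrow> real" where
  "switch_gain w s k =
     (if s = 0 then (if k < K then max 0 (p * (\<beta> * (w (Suc k) - w k) - c)) else 0)
      else (if 0 < k then q * max 0 (b s - \<beta> * (w k - w (k - 1))) else 0))"

definition bellman_op :: "(nat \<Rightarrow> nat \<Rightarrow> real) \<Rightarrow> nat \<Rightarrow> nat \<Rightarrow> real" where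
  "bellman_op U s k = max (Qval N K ps b c p q \<beta> U s k 0) (Qval N K ps b c p q \<beta> U s k 1)"

lemma bellman_op_eq:
  assumes "k \<le> K"
  shows "bellman_op U s k = \<beta> * mean_value N ps U k + switch_gain (mean_value N ps U) s k"
proof -
  consider "s \<noteq> 0" "0 < k" | "s \<noteq> 0" "k = 0" | "s = 0" "k < K" | "s = 0" "k = K"
    using assms by linarith
  then show ?thesis
  proof cases
    case 1
    define w where "w = mean_value N ps U"
    have "bellman_op U s k = max (\<beta> * w k) (\<beta> * w k + q * (b s - \<beta> * (w k - w (k - 1))))"
      using 1 assms unfolding bellman_op_def w_def by (simp add: Qval_busy algebra_simps)
    also have "\<dots> = \<beta> * w k + switch_gain w s k"
      using 1 q_range by (simp add: max_self_add_scaled switch_gain_def)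
    finally show ?thesis unfolding w_def .
  next
    case 2
    then show ?thesis
      by (simp add: bellman_op_def switch_gain_def Qval_busy_empty)
  next
    case 3
    then show ?thesis
      by (simp add: bellman_op_def switch_gain_def Qval_idle max_def algebra_simps)
  next
    case 4
    then show ?thesis using c_pos p_range
      by (simp add: bellman_op_def switch_gain_def Qval_idle_full max_def)
  qed
qed

lemma switch_gain_idle_second_diff:
  assumes cw: "concave_levels K w" and j: "1 \<le> j" "Suc j \<le> K"
  shows "switch_gain w 0 (Suc j) - 2 * switch_gain w 0 j + switch_gain w 0 (j - 1)
           \<le> - p * (\<beta> * (w (Suc j) - 2 * w j + w (j - 1)))"
proof -
  define x where "x = \<beta> * (w j - w (j - 1))"
  define y where "y = \<beta> * (w (Suc j) - w j)"
  have "y \<le> x"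
    using concave_levelsD[OF cw j] beta_range unfolding x_def y_def by (simp add: mult_left_mono)
  have "switch_gain w 0 (Suc j) \<le> switch_gain w 0 j"
  proof (cases "Suc j < K")
    case True
    then have "w (Suc (Suc j)) - w (Suc j) \<le> w (Suc j) - w j"
      using concave_levelsD[OF cw, of "Suc j"] by simp
    then have "p * (\<beta> * (w (Suc (Suc j)) - w (Suc j)) - c) \<le> p * (\<beta> * (w (Suc j) - w j) - c)"
      using p_range beta_range by (simp add: mult_left_mono)
    then show ?thesis using True j unfolding switch_gain_def by simp
  qed (use j in \<open>simp add: switch_gain_def\<close>)
  moreover have "switch_gain w 0 (j - 1) - switch_gain w 0 j \<le> p * (x - y)"
  proof -
    have "switch_gain w 0 (j - 1) - switch_gain w 0 j
          = max 0 (p * (y - c) + p * (x - y)) - max 0 (p * (y - c))"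
      using j unfolding switch_gain_def x_def y_def by (simp add: algebra_simps)
    also have "\<dots> \<le> p * (x - y)"
      using p_range \<open>y \<le> x\<close> by (intro max_zero_shift_le) simp
    finally show ?thesis .
  qed
  ultimately show ?thesis
    unfolding x_def y_def by (simp add: algebra_simps)
qed

lemma switch_gain_busy_second_diff:
  assumes "s \<noteq> 0" and cw: "concave_levels K w" and j: "1 \<le> j" "Suc j \<le> K"
  shows "switch_gain w s (Suc j) - 2 * switch_gain w s j + switch_gain w s (j - 1)
           \<le> - q * (\<beta> * (w (Suc j) - 2 * w j + w (j - 1)))"
proof -
  define x where "x = \<beta> * (w j - w (j - 1))"
  define y where "y = \<beta> * (w (Suc j) - w j)"
  have "y \<le> x"
    using concave_levelsD[OF cw j] beta_range unfolding x_def y_def by (simp add: mult_left_mono)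
  have "switch_gain w s (j - 1) \<le> switch_gain w s j"
  proof (cases "j = 1")
    case False
    then have "1 \<le> j - 1" "Suc (j - 1) = j"
      using j by auto
    then have "w j - w (j - 1) \<le> w (j - 1) - w (j - 1 - 1)"
      using concave_levelsD[OF cw, of "j - 1"] j by simp
    then have "b s - \<beta> * (w (j - 1) - w (j - 1 - 1)) \<le> b s - \<beta> * (w j - w (j - 1))"
      using beta_range by (simp add: mult_left_mono)
    then show ?thesis
      using False j \<open>s \<noteq> 0\<close> q_range unfolding switch_gain_def by (simp add: mult_left_mono)
  qed (use \<open>s \<noteq> 0\<close> q_range in \<open>simp add: switch_gain_def\<close>)
  moreover have "switch_gain w s (Suc j) - switch_gain w s j \<le> q * (x - y)"
  proof -
    have "switch_gain w s (Suc j) - switch_gain w s j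
          = q * (max 0 ((b s - x) + (x - y)) - max 0 (b s - x))"
      using \<open>s \<noteq> 0\<close> j unfolding switch_gain_def x_def y_def by (simp add: algebra_simps)
    also have "\<dots> \<le> q * (x - y)"
      using q_range \<open>y \<le> x\<close> by (intro mult_left_mono max_zero_shift_le) simp_all
    finally show ?thesis .
  qed
  ultimately show ?thesis
    unfolding x_def y_def by (simp add: algebra_simps)
qed

lemma bellman_op_second_diff_nonpos:
  assumes cw: "concave_levels K (mean_value N ps U)" and j: "1 \<le> j" "Suc j \<le> K"
  shows "bellman_op U s (Suc j) - 2 * bellman_op U s j + bellman_op U s (j - 1) \<le> 0"
proof -
  define w where "w = mean_value N ps U"
  define D where "D = \<beta> * (w (Suc j) - 2 * w j + w (j - 1))"
  have "D \<le> 0"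
    using concave_levelsD[OF cw j] beta_range unfolding D_def w_def by (simp add: mult_nonneg_nonpos)
  obtain r where r: "0 \<le> r" "r \<le> 1"
    and gain: "switch_gain w s (Suc j) - 2 * switch_gain w s j + switch_gain w s (j - 1) \<le> - r * D"
    using switch_gain_idle_second_diff[of w j] switch_gain_busy_second_diff[of s w j]
      p_range q_range cw j unfolding D_def w_def
    by (cases "s = 0") (auto intro!: less_imp_le)
  have "bellman_op U s (Suc j) - 2 * bellman_op U s j + bellman_op U s (j - 1)
        = D + (switch_gain w s (Suc j) - 2 * switch_gain w s j + switch_gain w s (j - 1))"
    using j unfolding D_def w_def by (simp add: bellman_op_eq algebra_simps)
  also have "\<dots> \<le> (1 - r) * D"
    using gain by (simp add: algebra_simps)
  also have "\<dots> \<le> 0"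
    using r \<open>D \<le> 0\<close> by (simp add: mult_nonneg_nonpos)
  finally show ?thesis .
qed

lemma mean_value_bellman_op_concave:
  assumes "concave_levels K (mean_value N ps U)"
  shows "concave_levels K (mean_value N ps (bellman_op U))"
  unfolding concave_levels_def
proof (intro allI impI)
  fix j
  assume j: "1 \<le> j" "Suc j \<le> K"
  let ?V = "bellman_op U"
  have "mean_value N ps ?V (Suc j) - 2 * mean_value N ps ?V j + mean_value N ps ?V (j - 1)
        = (\<Sum>s\<in>{0..N}. ps s * (?V s (Suc j) - 2 * ?V s j + ?V s (j - 1)))"
    unfolding mean_value_def
    by (simp add: sum.distrib sum_subtractf sum_distrib_left algebra_simps)
  also have "\<dots> \<le> 0"
    using ps_nonneg bellman_op_second_diff_nonpos[OF assms j]
    by (intro sum_nonpos) (simp add: mult_nonneg_nonpos)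
  finally show "mean_value N ps ?V (Suc j) - mean_value N ps ?V j
                \<le> mean_value N ps ?V j - mean_value N ps ?V (j - 1)"
    by simp
qed

lemma Qval_diff_le:
  assumes k: "k \<le> K" and a: "a \<le> 1"
    and M: "\<forall>k\<le>K. \<bar>mean_value N ps U k - mean_value N ps U' k\<bar> \<le> M"
  shows "\<bar>Qval N K ps b c p q \<beta> U s k a - Qval N K ps b c p q \<beta> U' s k a\<bar> \<le> \<beta> * M"
proof -
  define d where "d k = mean_value N ps U k - mean_value N ps U' k" for k
  have a': "0 \<le> 1 - real a" using a by simp
  have "\<exists>\<alpha> k'. 0 \<le> \<alpha> \<and> \<alpha> \<le> 1 \<and> k' \<le> K \<and>
     Qval N K ps b c p q \<beta> U s k a - Qval N K ps b c p q \<beta> U' s k a = \<beta> * ((1 - \<alpha>) * d k + \<alpha> * d k')"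
  proof -
    consider "s \<noteq> 0" "0 < k" | "s \<noteq> 0" "k = 0" | "s = 0" "k < K" | "s = 0" "k = K"
      using k by linarith
    then show ?thesis
    proof cases
      case 1
      have "q * real a \<le> 1" using q_range a by (simp add: mult_le_one)
      then show ?thesis using 1 k q_range
        by (intro exI[of _ "q * real a"] exI[of _ "k - 1"]) (simp add: Qval_busy d_def algebra_simps)
    next
      case 2
      then show ?thesis
        by (intro exI[of _ 0] exI[of _ 0]) (simp add: Qval_busy_empty d_def algebra_simps)
    next
      case 3
      have "p * (1 - real a) \<le> 1" using p_range a a' by (simp add: mult_le_one)
      then show ?thesis using 3 p_range a'
        by (intro exI[of _ "p * (1 - real a)"] exI[of _ "Suc k"]) (simp add: Qval_idle d_def algebra_simps)
    next
      case 4
      then show ?thesis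
        by (intro exI[of _ 0] exI[of _ K]) (simp add: Qval_idle_full d_def algebra_simps)
    qed
  qed
  then obtain \<alpha> k' where \<alpha>: "0 \<le> \<alpha>" "\<alpha> \<le> 1" "k' \<le> K"
    and diff: "Qval N K ps b c p q \<beta> U s k a - Qval N K ps b c p q \<beta> U' s k a = \<beta> * ((1 - \<alpha>) * d k + \<alpha> * d k')"
    by blast
  have "\<bar>(1 - \<alpha>) * d k + \<alpha> * d k'\<bar> \<le> M"
    using \<alpha> M k by (intro abs_convex_comb_le) (auto simp: d_def)
  then show ?thesis
    unfolding diff using beta_range by (simp add: abs_mult mult_left_mono)
qed

lemma bellman_op_dist:
  assumes "\<forall>k\<le>K. \<bar>mean_value N ps U k - mean_value N ps U' k\<bar> \<le> M" "k \<le> K"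
  shows "\<bar>bellman_op U s k - bellman_op U' s k\<bar> \<le> \<beta> * M"
  unfolding bellman_op_def using assms by (intro abs_max_diff_le Qval_diff_le) auto

lemma mean_value_dist:
  assumes "\<forall>s\<le>N. \<bar>U s k - U' s k\<bar> \<le> M"
  shows "\<bar>mean_value N ps U k - mean_value N ps U' k\<bar> \<le> M"
proof -
  have "mean_value N ps U k - mean_value N ps U' k = (\<Sum>s\<in>{0..N}. ps s * (U s k - U' s k))"
    unfolding mean_value_def by (simp add: sum_subtractf right_diff_distrib)
  also have "\<bar>\<dots>\<bar> \<le> M"
    using ps_nonneg ps_sum assms by (intro abs_weighted_sum_le) auto
  finally show ?thesis .
qed

lemma value_iteration_mean_dist:
  assumes V: "is_bellman_solution N K ps b c p q \<beta> V"
    and M: "\<forall>k\<le>K. \<bar>mean_value N ps U k - mean_value N ps V k\<bar> \<le> M"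
  shows "\<forall>k\<le>K. \<bar>mean_value N ps ((bellman_op ^^ n) U) k - mean_value N ps V k\<bar> \<le> \<beta> ^ n * M"
proof (induction n)
  case 0
  then show ?case using M by simp
next
  case (Suc n)
  have "\<bar>bellman_op ((bellman_op ^^ n) U) s k - V s k\<bar> \<le> \<beta> ^ Suc n * M" if "s \<le> N" "k \<le> K" for s k
  proof -
    have "V s k = bellman_op V s k"
      using V that unfolding is_bellman_solution_def bellman_op_def by simp
    then show ?thesis
      using bellman_op_dist[OF Suc.IH \<open>k \<le> K\<close>, of s] by (simp add: mult.assoc)
  qed
  then show ?case
    by (auto intro!: mean_value_dist)
qed

lemma mean_value_concave_if_bellman_solution:
  assumes V: "is_bellman_solution N K ps b c p q \<beta> V"
  shows "concave_levels K (mean_value N ps V)"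
proof (rule concave_levels_limit)
  define U :: "nat \<Rightarrow> nat \<Rightarrow> real" where "U = (\<lambda>s k. 0)"
  have U: "mean_value N ps U k = 0" for k
    by (simp add: U_def mean_value_def)
  show "concave_levels K (mean_value N ps ((bellman_op ^^ n) U))" for n
  proof (induction n)
    case 0
    then show ?case by (simp add: U concave_levels_def)
  next
    case (Suc n)
    then show ?case by (simp add: mean_value_bellman_op_concave)
  qed
  define C where "C = (\<Sum>k\<in>{0..K}. \<bar>mean_value N ps V k\<bar>)"
  have "\<forall>k\<le>K. \<bar>mean_value N ps U k - mean_value N ps V k\<bar> \<le> C"
    unfolding C_def U by (auto intro: member_le_sum)
  then show "(\<lambda>n. mean_value N ps ((bellman_op ^^ n) U) k) \<longlonglongrightarrow> mean_value N ps V k" if "k \<le> K" for k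
    using value_iteration_mean_dist[OF V] that beta_range
    by (intro LIMSEQ_geometric_bound[where \<beta> = \<beta> and C = C]) auto
qed

lemma opt_policy_busy_eq_1:
  assumes "s \<noteq> 0" "k \<le> K"
  shows "opt_policy N K ps b c p q \<beta> U s k = 1 \<longleftrightarrow>
    0 < k \<and> \<beta> * (mean_value N ps U k - mean_value N ps U (k - 1)) < b s"
proof (cases "k = 0")
  case False
  let ?Q = "Qval N K ps b c p q \<beta> U s k"
  have "?Q 1 - ?Q 0 = q * (b s - \<beta> * (mean_value N ps U k - mean_value N ps U (k - 1)))"
    using assms False by (simp add: Qval_busy algebra_simps)
  then have "?Q 1 \<le> ?Q 0 \<longleftrightarrow> q * (b s - \<beta> * (mean_value N ps U k - mean_value N ps U (k - 1))) \<le> 0"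
    by linarith
  also have "\<dots> \<longleftrightarrow> b s \<le> \<beta> * (mean_value N ps U k - mean_value N ps U (k - 1))"
    using q_range by (simp add: mult_le_0_iff)
  finally show ?thesis
    using assms False unfolding opt_policy_def by (simp add: not_le)
qed (use assms in \<open>simp add: opt_policy_def\<close>)

lemma opt_policy_idle_eq_1:
  assumes "k \<le> K"
  shows "opt_policy N K ps b c p q \<beta> U 0 k = 1 \<longleftrightarrow>
    k = K \<or> \<beta> * (mean_value N ps U (Suc k) - mean_value N ps U k) < c"
proof (cases "k = K")
  case False
  let ?Q = "Qval N K ps b c p q \<beta> U 0 k"
  have "?Q 0 - ?Q 1 = p * (\<beta> * (mean_value N ps U (Suc k) - mean_value N ps U k) - c)"
    using assms False by (simp add: Qval_idle algebra_simps)
  then have "?Q 1 \<le> ?Q 0 \<longleftrightarrow> 0 \<le> p * (\<beta> * (mean_value N ps U (Suc k) - mean_value N ps U k) - c)"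
    by linarith
  also have "\<dots> \<longleftrightarrow> c \<le> \<beta> * (mean_value N ps U (Suc k) - mean_value N ps U k)"
    using p_range by (simp add: zero_le_mult_iff)
  finally show ?thesis
    using False unfolding opt_policy_def by (simp add: not_le)
qed (simp add: opt_policy_def)

lemma opt_policy_mono:
  assumes V: "is_bellman_solution N K ps b c p q \<beta> V"
    and ij: "i \<le> j" "j \<le> K" and i: "opt_policy N K ps b c p q \<beta> V s i = 1"
  shows "opt_policy N K ps b c p q \<beta> V s j = 1"
proof -
  define w where "w = mean_value N ps V"
  have w: "concave_levels K w"
    unfolding w_def by (rule mean_value_concave_if_bellman_solution[OF V])
  show ?thesis
  proof (cases "s = 0")
    case True
    show ?thesis
    proof (cases "j = K")
      case False
      then have "\<beta> * (w (Suc i) - w i) < c"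
        using i ij True opt_policy_idle_eq_1[of i V] by (simp add: w_def)
      moreover have "w (Suc j) - w j \<le> w (Suc i) - w i"
        using concave_levels_increment_antimono[OF w, of "Suc i" "Suc j"] ij False by simp
      ultimately have "\<beta> * (w (Suc j) - w j) < c"
        using beta_range by (smt (verit) mult_left_mono)
      then show ?thesis
        using ij True opt_policy_idle_eq_1[of j V] by (simp add: w_def)
    qed (use True opt_policy_idle_eq_1[of j V] in simp)
  next
    case False
    then have "0 < i" "\<beta> * (w i - w (i - 1)) < b s"
      using i ij opt_policy_busy_eq_1[of s i V] by (simp_all add: w_def)
    moreover have "w j - w (j - 1) \<le> w i - w (i - 1)"
      using concave_levels_increment_antimono[OF w, of i j] ij \<open>0 < i\<close> by simp
    ultimately have "\<beta> * (w j - w (j - 1)) < b s"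
      using beta_range by (smt (verit) mult_left_mono)
    then show ?thesis
      using ij False \<open>0 < i\<close> opt_policy_busy_eq_1[of s j V] by (simp add: w_def)
  qed
qed

end

theorem proposition1:
  fixes N K :: nat and ps b :: "nat \<Rightarrow> real" and c p q \<beta> :: real
    and V :: "nat \<Rightarrow> nat \<Rightarrow> real"
  assumes ps_pos: "\<forall>s\<le>N. 0 < ps s \<and> ps s < 1"
    and ps_sum: "(\<Sum>s\<in>{0..N}. ps s) = 1"
    and b_pos: "0 < b 1"
    and b_mono: "\<forall>i j. 1 \<le> i \<longrightarrow> i < j \<longrightarrow> j \<le> N \<longrightarrow> b i < b j"
    and K_ge: "K \<ge> 1"
    and c_pos: "c > 0"
    and p_range: "0 < p" "p < 1"
    and q_range: "0 < q" "q < 1"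
    and beta_range: "0 < \<beta>" "\<beta> < 1"
    and V_opt: "is_bellman_solution N K ps b c p q \<beta> V"
  shows "\<forall>s\<le>N. \<exists>Kth :: int. \<forall>k\<le>K.
           opt_policy N K ps b c p q \<beta> V s k = (if int k < Kth then 0 else 1)"
proof (intro allI impI)
  fix s
  have ps_nonneg: "\<forall>s\<le>N. 0 \<le> ps s"
    using ps_pos by (simp add: less_imp_le)
  have "\<forall>k\<le>K. opt_policy N K ps b c p q \<beta> V s k = 0 \<or> opt_policy N K ps b c p q \<beta> V s k = 1"
    by (simp add: opt_policy_def)
  moreover have "\<forall>i j. i \<le> j \<longrightarrow> j \<le> K \<longrightarrow> opt_policy N K ps b c p q \<beta> V s i = 1
          \<longrightarrow> opt_policy N K ps b c p q \<beta> V s j = 1"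
    using opt_policy_mono[OF ps_nonneg ps_sum c_pos p_range q_range beta_range V_opt] by blast
  ultimately show "\<exists>Kth :: int. \<forall>k\<le>K. opt_policy N K ps b c p q \<beta> V s k = (if int k < Kth then 0 else 1)"
    by (rule mono_binary_threshold)
qed

end
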